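(* Let $(X,\mathcal{E})$ be a ballean and $Y\subseteq X$ an unbounded subset. If $(X,\mathcal{E})$ is maximal (respectively, extremely normal, ultranormal), then the subballean $(Y,\mathcal{E}_Y)$ is maximal (respectively, extremely normal, ultranormal).
   Context: A ballean $(X,\mathcal{E})$ is a set with a coarse structure. $E[x]=\{y:(x,y)\in E\}$, $E[A]=\bigcup_{a\in A}E[a]$. $Y$ is bounded if $Y\subseteq E[x]$ for some $x$ and $E\in\mathcal{E}$. The subballean on $Y$ has coarse structure $\mathcal{E}_Y=\{E\cap(Y\times Y):E\in\mathcal{E}\}$. $A$ is large if $X=E[A]$ for some $E$. Subsets $A,B$ are asymptotically disjoint if $E[A]\cap E[B]$ is bounded for every $E$. An unbounded ballean is maximal if $X$ is bounded in every coarse structure strictly containing $\mathcal{E}$; extremely normal if every unbounded subset is large; ultranormal if no two unbounded subsets are asymptotically disjoint. *)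

theory Defs
  imports Main
begin

text \<open>Coarse structure in the sense of Protasov: a family of entourages on X, each
containing the diagonal, closed under composition, inversion and taking subsets that
still contain the diagonal; balleans are assumed connected (the entourages cover X x X).\<close>
definition coarse_structure :: "'a set \<Rightarrow> ('a \<times> 'a) set set \<Rightarrow> bool" where
  "coarse_structure X \<E> \<longleftrightarrow>
     \<E> \<noteq> {} \<and>
     (\<forall>E\<in>\<E>. Id_on X \<subseteq> E \<and> E \<subseteq> X \<times> X) \<and>
     (\<forall>E\<in>\<E>. \<forall>F\<in>\<E>. E O F \<in> \<E>) \<and>
     (\<forall>E\<in>\<E>. E\<inverse> \<in> \<E>) \<and>
     (\<forall>E\<in>\<E>. \<forall>F. Id_on X \<subseteq> F \<and> F \<subseteq> E \<longrightarrow> F \<in> \<E>) \<and>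
     \<Union>\<E> = X \<times> X"

definition bounded_in :: "('a \<times> 'a) set set \<Rightarrow> 'a set \<Rightarrow> bool" where
  "bounded_in \<E> Y \<longleftrightarrow> (\<exists>x. \<exists>E\<in>\<E>. Y \<subseteq> E `` {x})"

definition large_in :: "'a set \<Rightarrow> ('a \<times> 'a) set set \<Rightarrow> 'a set \<Rightarrow> bool" where
  "large_in X \<E> A \<longleftrightarrow> (\<exists>E\<in>\<E>. X = E `` A)"

definition asymp_disjoint :: "('a \<times> 'a) set set \<Rightarrow> 'a set \<Rightarrow> 'a set \<Rightarrow> bool" where
  "asymp_disjoint \<E> A B \<longleftrightarrow> (\<forall>E\<in>\<E>. bounded_in \<E> (E `` A \<inter> E `` B))"

definition subballean :: "('a \<times> 'a) set set \<Rightarrow> 'a set \<Rightarrow> ('a \<times> 'a) set set" where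
  "subballean \<E> Y = (\<lambda>E. E \<inter> (Y \<times> Y)) ` \<E>"

definition maximal_ballean :: "'a set \<Rightarrow> ('a \<times> 'a) set set \<Rightarrow> bool" where
  "maximal_ballean X \<E> \<longleftrightarrow>
     \<not> bounded_in \<E> X \<and>
     (\<forall>\<E>'. coarse_structure X \<E>' \<and> \<E> \<subset> \<E>' \<longrightarrow> bounded_in \<E>' X)"

definition extremely_normal :: "'a set \<Rightarrow> ('a \<times> 'a) set set \<Rightarrow> bool" where
  "extremely_normal X \<E> \<longleftrightarrow>
     (\<forall>A. A \<subseteq> X \<and> \<not> bounded_in \<E> A \<longrightarrow> large_in X \<E> A)"

definition ultranormal :: "'a set \<Rightarrow> ('a \<times> 'a) set set \<Rightarrow> bool" where
  "ultranormal X \<E> \<longleftrightarrow>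
     (\<forall>A B. A \<subseteq> X \<and> B \<subseteq> X \<and> \<not> bounded_in \<E> A \<and> \<not> bounded_in \<E> B
        \<longrightarrow> \<not> asymp_disjoint \<E> A B)"

end

theory Submission
  imports Defs
begin

text \<open>Bounded subsets of \<open>Y\<close> are the same for \<open>\<E>\<close> and for \<open>\<E>\<^sub>Y\<close>, and largeness and
non-asymptotic-disjointness in \<open>X\<close> pass to \<open>Y\<close> by restricting entourages; for the latter,
\<open>E[A] \<inter> E[B]\<close> is replaced by the points of \<open>A\<close> that are \<open>E \<circ> E\<inverse>\<close>-close to \<open>B\<close>, which lie
in \<open>Y\<close>. For maximality, a coarse structure \<open>\<G>\<close> on \<open>Y\<close> strictly containing \<open>\<E>\<^sub>Y\<close> generates
together with \<open>\<E>\<close> the coarse structure of all \<open>H \<supseteq> Id\<^sub>X\<close> with \<open>H \<subseteq> E \<union> E \<circ> G \<circ> E\<close>,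
which strictly contains \<open>\<E>\<close>. So \<open>X\<close> is bounded in it, and since \<open>Y\<close> is \<open>\<E>\<close>-unbounded, a
ball covering \<open>Y\<close> must pass through some \<open>G \<in> \<G>\<close>, which makes \<open>Y\<close> bounded in \<open>\<G>\<close>.\<close>

lemma
  assumes "coarse_structure X \<E>"
  shows coarse_structure_nonempty: "\<E> \<noteq> {}"
    and coarse_structure_Id_on_subset: "E \<in> \<E> \<Longrightarrow> Id_on X \<subseteq> E"
    and coarse_structure_subset_Times: "E \<in> \<E> \<Longrightarrow> E \<subseteq> X \<times> X"
    and coarse_structure_relcomp: "E \<in> \<E> \<Longrightarrow> F \<in> \<E> \<Longrightarrow> E O F \<in> \<E>"
    and coarse_structure_converse: "E \<in> \<E> \<Longrightarrow> E\<inverse> \<in> \<E>"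
    and coarse_structure_downward_closed: "E \<in> \<E> \<Longrightarrow> Id_on X \<subseteq> F \<Longrightarrow> F \<subseteq> E \<Longrightarrow> F \<in> \<E>"
    and coarse_structure_Union: "\<Union>\<E> = X \<times> X"
  using assms unfolding coarse_structure_def by (meson, meson, meson, meson, meson, meson, meson)

lemma coarse_structure_Id_on:
  assumes "coarse_structure X \<E>"
  shows "Id_on X \<in> \<E>"
proof -
  obtain E where E: "E \<in> \<E>" using coarse_structure_nonempty[OF assms] by blast
  then have "Id_on X \<subseteq> E" by (rule coarse_structure_Id_on_subset[OF assms])
  then show ?thesis using coarse_structure_downward_closed[OF assms E] by blast
qed

lemma coarse_structure_refl: "coarse_structure X \<E> \<Longrightarrow> E \<in> \<E> \<Longrightarrow> x \<in> X \<Longrightarrow> (x, x) \<in> E"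
  using coarse_structure_Id_on_subset[of X \<E> E] by blast

lemma Restr_in_subballean: "E \<in> \<E> \<Longrightarrow> Restr E Y \<in> subballean \<E> Y"
  unfolding subballean_def by blast

lemma bounded_inI: "E \<in> \<E> \<Longrightarrow> A \<subseteq> E `` {x} \<Longrightarrow> bounded_in \<E> A"
  unfolding bounded_in_def by (rule exI, rule bexI)

lemma bounded_in_mono: "A \<subseteq> B \<Longrightarrow> bounded_in \<E> B \<Longrightarrow> bounded_in \<E> A"
  unfolding bounded_in_def by blast

lemma bounded_in_Image:
  assumes "coarse_structure X \<E>" and "E \<in> \<E>" and "bounded_in \<E> C"
  shows "bounded_in \<E> (E `` C)"
proof -
  obtain x K where "K \<in> \<E>" and "C \<subseteq> K `` {x}"
    using assms(3) unfolding bounded_in_def by blast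
  then have "E `` C \<subseteq> (K O E) `` {x}" and "K O E \<in> \<E>"
    using assms(1,2) coarse_structure_relcomp by blast+
  then show ?thesis unfolding bounded_in_def by blast
qed

lemma bounded_in_subballean_iff:
  assumes cs: "coarse_structure X \<E>" and "Y \<subseteq> X" and "A \<subseteq> Y"
  shows "bounded_in (subballean \<E> Y) A \<longleftrightarrow> bounded_in \<E> A"
proof
  assume "bounded_in (subballean \<E> Y) A"
  then show "bounded_in \<E> A" unfolding bounded_in_def subballean_def by blast
next
  assume bounded: "bounded_in \<E> A"
  show "bounded_in (subballean \<E> Y) A"
  proof (cases "A = {}")
    case True
    then show ?thesis
      using coarse_structure_nonempty[OF cs] unfolding bounded_in_def subballean_def by blast
  next
    case False
    then obtain a where a: "a \<in> A" by blast
    obtain x E where E: "E \<in> \<E>" "A \<subseteq> E `` {x}"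
      using bounded unfolding bounded_in_def by blast
    \<comment> \<open>recentre the ball at a point of \<open>A\<close>, which lies in \<open>Y\<close>\<close>
    have "A \<subseteq> (Restr (E\<inverse> O E) Y) `` {a}"
      using E(2) a assms(3) by blast
    moreover have "E\<inverse> O E \<in> \<E>"
      by (rule coarse_structure_relcomp[OF cs coarse_structure_converse[OF cs E(1)] E(1)])
    ultimately show ?thesis
      unfolding bounded_in_def by (blast intro: Restr_in_subballean)
  qed
qed

lemma extremely_normal_subballean:
  assumes cs: "coarse_structure X \<E>" and YX: "Y \<subseteq> X" and en: "extremely_normal X \<E>"
  shows "extremely_normal Y (subballean \<E> Y)"
  unfolding extremely_normal_def
proof (intro allI impI, elim conjE)
  fix A assume AY: "A \<subseteq> Y" and "\<not> bounded_in (subballean \<E> Y) A"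
  then have "\<not> bounded_in \<E> A" using bounded_in_subballean_iff[OF cs YX] by blast
  then obtain E where E: "E \<in> \<E>" "X = E `` A"
    using en AY YX unfolding extremely_normal_def large_in_def by blast
  have "Y = (Restr E Y) `` A" using E(2) AY YX by blast
  then show "large_in Y (subballean \<E> Y) A"
    unfolding large_in_def using Restr_in_subballean[OF E(1)] by blast
qed

lemma ultranormal_subballean:
  assumes cs: "coarse_structure X \<E>" and YX: "Y \<subseteq> X" and un: "ultranormal X \<E>"
  shows "ultranormal Y (subballean \<E> Y)"
  unfolding ultranormal_def
proof (intro allI impI, elim conjE)
  fix A B
  assume AY: "A \<subseteq> Y" and BY: "B \<subseteq> Y"
    and "\<not> bounded_in (subballean \<E> Y) A" and "\<not> bounded_in (subballean \<E> Y) B"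
  then have "\<not> bounded_in \<E> A" and "\<not> bounded_in \<E> B"
    by (simp_all add: bounded_in_subballean_iff[OF cs YX])
  moreover have "A \<subseteq> X" and "B \<subseteq> X" using AY BY YX by blast+
  ultimately have "\<not> asymp_disjoint \<E> A B"
    using un unfolding ultranormal_def by blast
  then obtain E where E: "E \<in> \<E>" and unbounded: "\<not> bounded_in \<E> (E `` A \<inter> E `` B)"
    unfolding asymp_disjoint_def by blast
  define F where "F = E O E\<inverse>"
  define C where "C = {a \<in> A. \<exists>b \<in> B. (a, b) \<in> F}"
  have F: "F \<in> \<E>"
    unfolding F_def by (rule coarse_structure_relcomp[OF cs E coarse_structure_converse[OF cs E]])
  have "E `` A \<inter> E `` B \<subseteq> E `` C"
    unfolding C_def F_def by blast
  then have "\<not> bounded_in \<E> C"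
    using unbounded bounded_in_Image[OF cs E] bounded_in_mono by metis
  moreover have "C \<subseteq> (Restr F Y) `` A \<inter> (Restr F Y) `` B"
  proof
    fix a assume "a \<in> C"
    then obtain b where ab: "a \<in> A" "b \<in> B" "(a, b) \<in> F" unfolding C_def by blast
    then have "(b, a) \<in> F" "(a, a) \<in> F"
      unfolding F_def using AY YX coarse_structure_refl[OF cs E] by blast+
    with ab AY BY show "a \<in> (Restr F Y) `` A \<inter> (Restr F Y) `` B"
      by blast
  qed
  moreover have "(Restr F Y) `` A \<inter> (Restr F Y) `` B \<subseteq> Y"
    by blast
  ultimately have "\<not> bounded_in (subballean \<E> Y) ((Restr F Y) `` A \<inter> (Restr F Y) `` B)"
    using bounded_in_subballean_iff[OF cs YX] bounded_in_mono by metis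
  then show "\<not> asymp_disjoint (subballean \<E> Y) A B"
    unfolding asymp_disjoint_def using Restr_in_subballean[OF F] by blast
qed

lemma subset_relcomp_right: "S \<subseteq> A \<times> A \<Longrightarrow> Id_on A \<subseteq> R \<Longrightarrow> S \<subseteq> S O R"
  by blast

lemma subset_relcomp_left: "S \<subseteq> A \<times> A \<Longrightarrow> Id_on A \<subseteq> R \<Longrightarrow> S \<subseteq> R O S"
  by blast

lemma sandwich_relcomp_subset:
  assumes E1: "Id_on X \<subseteq> E1" "E1 \<subseteq> X \<times> X" and E2: "Id_on X \<subseteq> E2" "E2 \<subseteq> X \<times> X"
    and G1: "Id_on Y \<subseteq> G1" "G1 \<subseteq> Y \<times> Y" and G2: "Id_on Y \<subseteq> G2" "G2 \<subseteq> Y \<times> Y"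
    and "Y \<subseteq> X"
  defines "E \<equiv> E1 O E2"
  shows "(E1 \<union> E1 O G1 O E1) O (E2 \<union> E2 O G2 O E2) \<subseteq> E \<union> E O (G1 O Restr E Y O G2) O E"
    (is "_ \<subseteq> _ \<union> _ O ?G O _")
proof -
  have E1E: "E1 \<subseteq> E" unfolding E_def using E1(2) E2(1) by (rule subset_relcomp_right)
  have E2E: "E2 \<subseteq> E" unfolding E_def using E2(2) E1(1) by (rule subset_relcomp_left)
  have "Id_on Y \<subseteq> Restr E Y"
    using E1(1) E2(1) \<open>Y \<subseteq> X\<close> unfolding E_def by blast
  then have "Id_on Y \<subseteq> Restr E Y O G2" "Id_on Y \<subseteq> G1 O Restr E Y"
    using G1(1) G2(1) by blast+
  then have G1G: "G1 \<subseteq> ?G" and G2G: "G2 \<subseteq> ?G"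
    using subset_relcomp_right[OF G1(2)] subset_relcomp_left[OF G2(2), of "G1 O Restr E Y"]
    by (simp_all add: O_assoc)
  \<comment> \<open>\<open>G1\<close> and \<open>G2\<close> live on \<open>Y\<close>, so the middle factor may be restricted to \<open>Y\<close>\<close>
  have G12G: "G1 O E O G2 \<subseteq> ?G"
  proof
    fix p assume "p \<in> G1 O E O G2"
    then obtain a b c d where "p = (a, d)" "(a, b) \<in> G1" "(b, c) \<in> E" "(c, d) \<in> G2"
      by blast
    with G1(2) G2(2) show "p \<in> ?G" by blast
  qed
  have "E O G2 O E2 \<subseteq> E O ?G O E" "E1 O G1 O E \<subseteq> E O ?G O E"
      "E1 O (G1 O E O G2) O E2 \<subseteq> E O ?G O E"
    using relcomp_mono[OF order_refl relcomp_mono[OF G2G E2E]]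
      relcomp_mono[OF E1E relcomp_mono[OF G1G order_refl]]
      relcomp_mono[OF E1E relcomp_mono[OF G12G E2E]]
    by (simp_all only:)
  then have "E \<union> E O G2 O E2 \<union> E1 O G1 O E \<union> E1 O (G1 O E O G2) O E2 \<subseteq> E \<union> E O ?G O E"
    by blast
  moreover have "(E1 \<union> E1 O G1 O E1) O (E2 \<union> E2 O G2 O E2) =
      E \<union> E O G2 O E2 \<union> E1 O G1 O E \<union> E1 O (G1 O E O G2) O E2"
    unfolding E_def by (simp add: relcomp_distrib relcomp_distrib2 O_assoc Un_ac)
  ultimately show ?thesis by simp
qed

definition coarse_join :: "'a set \<Rightarrow> ('a \<times> 'a) set set \<Rightarrow> ('a \<times> 'a) set set \<Rightarrow> ('a \<times> 'a) set set"
  where "coarse_join X \<E> \<G> = {H. Id_on X \<subseteq> H \<and> (\<exists>E\<in>\<E>. \<exists>G\<in>\<G>. H \<subseteq> E \<union> E O G O E)}"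

lemma coarse_joinI:
  "Id_on X \<subseteq> H \<Longrightarrow> E \<in> \<E> \<Longrightarrow> G \<in> \<G> \<Longrightarrow> H \<subseteq> E \<union> E O G O E \<Longrightarrow> H \<in> coarse_join X \<E> \<G>"
  unfolding coarse_join_def by blast

lemma coarse_joinE:
  assumes "H \<in> coarse_join X \<E> \<G>"
  obtains E G where "Id_on X \<subseteq> H" "E \<in> \<E>" "G \<in> \<G>" "H \<subseteq> E \<union> E O G O E"
  using assms unfolding coarse_join_def by blast

lemma subset_coarse_join:
  assumes cs: "coarse_structure X \<E>" and cs': "coarse_structure Y \<G>"
  shows "\<E> \<subseteq> coarse_join X \<E> \<G>"
proof
  fix E assume E: "E \<in> \<E>"
  obtain G where "G \<in> \<G>" using coarse_structure_nonempty[OF cs'] by blast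
  with E show "E \<in> coarse_join X \<E> \<G>"
    by (intro coarse_joinI[OF coarse_structure_Id_on_subset[OF cs E]]) auto
qed

lemma coarse_join_relcomp:
  assumes cs: "coarse_structure X \<E>" and cs': "coarse_structure Y \<G>" and YX: "Y \<subseteq> X"
    and sub: "subballean \<E> Y \<subseteq> \<G>"
    and H1: "H1 \<in> coarse_join X \<E> \<G>" and H2: "H2 \<in> coarse_join X \<E> \<G>"
  shows "H1 O H2 \<in> coarse_join X \<E> \<G>"
proof -
  obtain E1 G1 where EG1: "Id_on X \<subseteq> H1" "E1 \<in> \<E>" "G1 \<in> \<G>" "H1 \<subseteq> E1 \<union> E1 O G1 O E1"
    using H1 by (rule coarse_joinE)
  obtain E2 G2 where EG2: "Id_on X \<subseteq> H2" "E2 \<in> \<E>" "G2 \<in> \<G>" "H2 \<subseteq> E2 \<union> E2 O G2 O E2"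
    using H2 by (rule coarse_joinE)
  define E where "E = E1 O E2"
  define G where "G = G1 O Restr E Y O G2"
  have E: "E \<in> \<E>"
    unfolding E_def by (rule coarse_structure_relcomp[OF cs EG1(2) EG2(2)])
  have "Restr E Y \<in> \<G>"
    using sub Restr_in_subballean[OF E] by blast
  then have G: "G \<in> \<G>"
    unfolding G_def using EG1(3) EG2(3) by (intro coarse_structure_relcomp[OF cs'])
  have "(E1 \<union> E1 O G1 O E1) O (E2 \<union> E2 O G2 O E2) \<subseteq> E \<union> E O G O E"
    unfolding E_def G_def
    by (rule sandwich_relcomp_subset[OF
          coarse_structure_Id_on_subset[OF cs EG1(2)] coarse_structure_subset_Times[OF cs EG1(2)]
          coarse_structure_Id_on_subset[OF cs EG2(2)] coarse_structure_subset_Times[OF cs EG2(2)]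
          coarse_structure_Id_on_subset[OF cs' EG1(3)] coarse_structure_subset_Times[OF cs' EG1(3)]
          coarse_structure_Id_on_subset[OF cs' EG2(3)] coarse_structure_subset_Times[OF cs' EG2(3)]
          YX])
  then have "H1 O H2 \<subseteq> E \<union> E O G O E"
    using relcomp_mono[OF EG1(4) EG2(4)] by (rule order_trans[rotated])
  moreover have "Id_on X \<subseteq> H1 O H2"
    using EG1(1) EG2(1) by blast
  ultimately show ?thesis
    using E G by (intro coarse_joinI)
qed

lemma coarse_structure_coarse_join:
  assumes cs: "coarse_structure X \<E>" and cs': "coarse_structure Y \<G>" and YX: "Y \<subseteq> X"
    and sub: "subballean \<E> Y \<subseteq> \<G>"
  shows "coarse_structure X (coarse_join X \<E> \<G>)"
  unfolding coarse_structure_def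
proof (intro conjI ballI allI impI)
  let ?J = "coarse_join X \<E> \<G>"
  have J: "\<E> \<subseteq> ?J" by (rule subset_coarse_join[OF cs cs'])
  then show "?J \<noteq> {}" using coarse_structure_nonempty[OF cs] by blast
  show "Id_on X \<subseteq> H" if "H \<in> ?J" for H
    using that by (rule coarse_joinE)
  show in_Times: "H \<subseteq> X \<times> X" if "H \<in> ?J" for H
  proof -
    obtain E G where "E \<in> \<E>" "G \<in> \<G>" "H \<subseteq> E \<union> E O G O E"
      using \<open>H \<in> ?J\<close> by (rule coarse_joinE)
    moreover have "E \<union> E O G O E \<subseteq> X \<times> X"
      using coarse_structure_subset_Times[OF cs \<open>E \<in> \<E>\<close>]
        coarse_structure_subset_Times[OF cs' \<open>G \<in> \<G>\<close>] YX
      by blast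
    ultimately show ?thesis by (meson order_trans)
  qed
  show "H1 O H2 \<in> ?J" if "H1 \<in> ?J" "H2 \<in> ?J" for H1 H2
    using coarse_join_relcomp[OF cs cs' YX sub that] .
  show "H\<inverse> \<in> ?J" if H: "H \<in> ?J" for H
  proof -
    obtain E G where "Id_on X \<subseteq> H" "E \<in> \<E>" "G \<in> \<G>" "H \<subseteq> E \<union> E O G O E"
      using H by (rule coarse_joinE)
    then have "Id_on X \<subseteq> H\<inverse>" "E\<inverse> \<in> \<E>" "G\<inverse> \<in> \<G>" "H\<inverse> \<subseteq> E\<inverse> \<union> E\<inverse> O G\<inverse> O E\<inverse>"
      by (auto simp: coarse_structure_converse[OF cs] coarse_structure_converse[OF cs'] O_assoc)
    then show ?thesis by (rule coarse_joinI)
  qed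
  show "F \<in> ?J" if H: "H \<in> ?J" and F: "Id_on X \<subseteq> F \<and> F \<subseteq> H" for H F
  proof -
    obtain E G where "E \<in> \<E>" "G \<in> \<G>" "H \<subseteq> E \<union> E O G O E"
      using H by (rule coarse_joinE)
    moreover from F have "Id_on X \<subseteq> F" "F \<subseteq> H" by blast+
    ultimately show ?thesis
      by (intro coarse_joinI) (blast, assumption, assumption, rule order_trans)
  qed
  have "\<Union>?J \<subseteq> X \<times> X" using in_Times by (rule Union_least)
  moreover have "X \<times> X \<subseteq> \<Union>?J"
    using Union_mono[OF J] coarse_structure_Union[OF cs] by simp
  ultimately show "\<Union>?J = X \<times> X" by (rule antisym)
qed

lemma bounded_in_of_bounded_in_coarse_join:
  assumes cs: "coarse_structure X \<E>" and cs': "coarse_structure Y \<G>" and YX: "Y \<subseteq> X"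
    and sub: "subballean \<E> Y \<subseteq> \<G>" and unbounded: "\<not> bounded_in \<E> Y"
    and bounded: "bounded_in (coarse_join X \<E> \<G>) Y"
  shows "bounded_in \<G> Y"
proof -
  obtain x E G where E: "E \<in> \<E>" and G: "G \<in> \<G>" and ball: "Y \<subseteq> (E \<union> E O G O E) `` {x}"
    using bounded unfolding bounded_in_def coarse_join_def by blast
  have GY: "G \<subseteq> Y \<times> Y" and G_refl: "\<And>y. y \<in> Y \<Longrightarrow> (y, y) \<in> G"
    using coarse_structure_subset_Times[OF cs' G] coarse_structure_refl[OF cs' G] by blast+
  \<comment> \<open>\<open>Y \<not>\<subseteq> E[x]\<close>, and a path through \<open>G \<subseteq> Y \<times> Y\<close> enters \<open>Y\<close> after its first \<open>E\<close>-step\<close>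
  obtain y0 where y0: "y0 \<in> Y" "(x, y0) \<in> E"
  proof -
    have "\<not> Y \<subseteq> E `` {x}"
      using unbounded E unfolding bounded_in_def by blast
    then show ?thesis using that ball GY by blast
  qed
  define N where "N = Restr (E\<inverse> O E) Y"
  have "N \<in> \<G>"
    unfolding N_def using sub
      Restr_in_subballean[OF coarse_structure_relcomp[OF cs coarse_structure_converse[OF cs E] E]]
    by blast
  then have NGN: "N O G O N \<in> \<G>"
    using G by (intro coarse_structure_relcomp[OF cs'])
  have N_refl: "(y, y) \<in> N" if "y \<in> Y" for y
    unfolding N_def using that YX coarse_structure_refl[OF cs E] by blast
  have "Y \<subseteq> (N O G O N) `` {y0}"
  proof
    fix y assume y: "y \<in> Y"
    then consider "(x, y) \<in> E" | b c where "(x, b) \<in> E" "(b, c) \<in> G" "(c, y) \<in> E"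
      using ball by blast
    then show "y \<in> (N O G O N) `` {y0}"
    proof cases
      case 1
      then have "(y0, y) \<in> N" unfolding N_def using y y0 by blast
      with G_refl[OF y] N_refl[OF y] show ?thesis
        by (intro ImageI[OF _ singletonI] relcompI)
    next
      case (2 b c)
      with GY have "(y0, b) \<in> N" "(c, y) \<in> N"
        unfolding N_def using y y0 YX coarse_structure_refl[OF cs E] by blast+
      with \<open>(b, c) \<in> G\<close> show ?thesis
        by (intro ImageI[OF _ singletonI] relcompI)
    qed
  qed
  with NGN show ?thesis by (rule bounded_inI)
qed

lemma maximal_ballean_subballean:
  assumes cs: "coarse_structure X \<E>" and YX: "Y \<subseteq> X" and unbounded: "\<not> bounded_in \<E> Y"
    and maximal: "maximal_ballean X \<E>"
  shows "maximal_ballean Y (subballean \<E> Y)"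
  unfolding maximal_ballean_def
proof (intro conjI allI impI)
  show "\<not> bounded_in (subballean \<E> Y) Y"
    using unbounded by (simp add: bounded_in_subballean_iff[OF cs YX])
next
  fix \<G> assume "coarse_structure Y \<G> \<and> subballean \<E> Y \<subset> \<G>"
  then have cs': "coarse_structure Y \<G>" and finer: "subballean \<E> Y \<subset> \<G>" by blast+
  then have sub: "subballean \<E> Y \<subseteq> \<G>" by blast
  obtain G where G: "G \<in> \<G>" "G \<notin> subballean \<E> Y" using finer by blast
  have GY: "G \<subseteq> Y \<times> Y" "Id_on Y \<subseteq> G"
    using coarse_structure_subset_Times[OF cs' G(1)] coarse_structure_Id_on_subset[OF cs' G(1)]
    by blast+
  have "Id_on X O G O Id_on X = G"
    using GY(1) YX by auto
  then have "G \<union> Id_on X \<in> coarse_join X \<E> \<G>"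
    by (intro coarse_joinI[OF _ coarse_structure_Id_on[OF cs] G(1)]) auto
  moreover have "G \<union> Id_on X \<notin> \<E>"
  proof
    assume "G \<union> Id_on X \<in> \<E>"
    moreover have "Restr (G \<union> Id_on X) Y = G" using GY YX by blast
    ultimately show False using G(2) Restr_in_subballean[of "G \<union> Id_on X" \<E> Y] by simp
  qed
  ultimately have "\<E> \<subset> coarse_join X \<E> \<G>"
    using subset_coarse_join[OF cs cs'] by blast
  then have "bounded_in (coarse_join X \<E> \<G>) X"
    using maximal coarse_structure_coarse_join[OF cs cs' YX sub]
    unfolding maximal_ballean_def by blast
  then have "bounded_in (coarse_join X \<E> \<G>) Y"
    using YX bounded_in_mono by blast
  then show "bounded_in \<G> Y"
    by (rule bounded_in_of_bounded_in_coarse_join[OF cs cs' YX sub unbounded])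
qed

theorem proposition4:
  fixes X Y :: "'a set" and \<E> :: "('a \<times> 'a) set set"
  assumes "coarse_structure X \<E>"
    and "Y \<subseteq> X"
    and "\<not> bounded_in \<E> Y"
  shows "(maximal_ballean X \<E> \<longrightarrow> maximal_ballean Y (subballean \<E> Y)) \<and>
         (extremely_normal X \<E> \<longrightarrow> extremely_normal Y (subballean \<E> Y)) \<and>
         (ultranormal X \<E> \<longrightarrow> ultranormal Y (subballean \<E> Y))"
  using maximal_ballean_subballean[OF assms] extremely_normal_subballean[OF assms(1,2)]
    ultranormal_subballean[OF assms(1,2)]
  by (intro conjI impI)

end
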